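(* Let $L=\mathbb Z^3\subset\mathbb R^3$ with $B(x,y)=xGy^T$, $G=\begin{pmatrix}2&-1&0\\-1&2&-1\\0&-1&2\end{pmatrix}$ (the $A_3$ lattice), $Q(x)=\frac12B(x,x)$, and for $\alpha,\beta\in\mathbb Q^3$ put $\theta_{\alpha,\beta}(\tau,z)=\sum_{v\in\mathbb Z^3}e(B(\beta,v))\,e(\tau Q(\alpha+v)+B(\alpha+v,z))$ on $\mathbb H\times\mathbb C^3$. Let $A=\{(0,0,0),(\frac12,0,\frac12)\}$ and $\mathcal B=\{(0,0,0),(0,\frac12,0),(\frac12,0,0),(\frac12,\frac12,0)\}$. Then the five functions $\theta_{\alpha,0}^2$ ($\alpha\in A$), $\theta_{0,\beta}^2$ ($\beta\in\mathcal B$) are $\mathbb C$-linearly independent, and for any $\alpha\in A$, $\beta\in\mathcal B$, $$\theta_{\alpha,\beta}^2+\theta_{0,0}^2=\theta_{\alpha,0}^2+\theta_{0,\beta}^2.$$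
   Context: $e(x)=\exp(2\pi ix)$, $\mathbb H$ the upper half plane; $B$ is extended bilinearly to $\mathbb C^3$. *)

theory Defs
  imports "HOL-Analysis.Analysis"
begin

type_synonym cvec3 = "complex \<times> complex \<times> complex"

definition e :: "complex \<Rightarrow> complex" where
  "e x = exp (2 * of_real pi * \<i> * x)"

fun B :: "cvec3 \<Rightarrow> cvec3 \<Rightarrow> complex" where
  "B (x1, x2, x3) (y1, y2, y3) =
     2*x1*y1 - x1*y2 - x2*y1 + 2*x2*y2 - x2*y3 - x3*y2 + 2*x3*y3"

definition Q :: "cvec3 \<Rightarrow> complex" where
  "Q x = B x x / 2"

fun vadd :: "cvec3 \<Rightarrow> cvec3 \<Rightarrow> cvec3" where
  "vadd (x1, x2, x3) (y1, y2, y3) = (x1 + y1, x2 + y2, x3 + y3)"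

fun ofQ :: "rat \<times> rat \<times> rat \<Rightarrow> cvec3" where
  "ofQ (a, b, c) = (of_rat a, of_rat b, of_rat c)"

fun ofZ :: "int \<times> int \<times> int \<Rightarrow> cvec3" where
  "ofZ (a, b, c) = (of_int a, of_int b, of_int c)"

definition theta :: "rat \<times> rat \<times> rat \<Rightarrow> rat \<times> rat \<times> rat \<Rightarrow> complex \<Rightarrow> cvec3 \<Rightarrow> complex" where
  "theta \<alpha> \<beta> \<tau> z = (\<Sum>\<^sub>\<infinity>v\<in>(UNIV :: (int \<times> int \<times> int) set).
      e (B (ofQ \<beta>) (ofZ v)) * e (\<tau> * Q (vadd (ofQ \<alpha>) (ofZ v)) + B (vadd (ofQ \<alpha>) (ofZ v)) z))"

definition setA :: "(rat \<times> rat \<times> rat) set" where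
  "setA = {(0,0,0), (1/2,0,1/2)}"

definition setB :: "(rat \<times> rat \<times> rat) set" where
  "setB = {(0,0,0), (0,1/2,0), (1/2,0,0), (1/2,1/2,0)}"

definition F5 :: "nat \<Rightarrow> complex \<Rightarrow> cvec3 \<Rightarrow> complex" where
  "F5 i \<tau> z = (case i of
      0 \<Rightarrow> theta (0,0,0) (0,0,0) \<tau> z ^ 2
    | Suc 0 \<Rightarrow> theta (1/2,0,1/2) (0,0,0) \<tau> z ^ 2
    | Suc (Suc 0) \<Rightarrow> theta (0,0,0) (0,1/2,0) \<tau> z ^ 2
    | Suc (Suc (Suc 0)) \<Rightarrow> theta (0,0,0) (1/2,0,0) \<tau> z ^ 2
    | _ \<Rightarrow> theta (0,0,0) (1/2,1/2,0) \<tau> z ^ 2)"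

end

theory Submission
  imports Defs "HOL-Real_Asymp.Real_Asymp"
begin

text \<open>
  Independence. Along the ray \<open>\<tau> = iT, z = -iTp\<close> with \<open>2p \<in> \<int>\<^sup>3\<close>, the term of \<open>\<theta>\<^sub>\<alpha>\<^sub>,\<^sub>\<beta>\<close>
  indexed by \<open>v\<close> has modulus \<open>exp (-2\<pi>T (Q(\<alpha> + v - p) - Q(p)))\<close>, so after rescaling only the
  points of \<open>\<alpha> + \<int>\<^sup>3\<close> closest to \<open>p\<close> survive as \<open>T \<rightarrow> \<infinity>\<close>. A vanishing combination
  \<open>\<Sum> c\<^sub>i \<theta>\<^sub>i\<^sup>2\<close> thus yields \<open>\<Sum> c\<^sub>i L\<^sub>i\<^sup>2 = 0\<close>, where \<open>L\<^sub>i\<close> is the sum of the character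
  \<open>e(B(\<beta>\<^sub>i, v))\<close> over these closest points. The centres \<open>p = 0, (1/2,0,1/2), (1/2,0,0),
  (0,1/2,0), (1/2,1/2,0)\<close> give five relations that force all \<open>c\<^sub>i = 0\<close>.

  Identity. For points \<open>x, y\<close> of \<open>\<alpha> + \<int>\<^sup>3\<close> put \<open>S = x + y\<close> and \<open>D = x - y\<close>. As
  \<open>e(B(\<beta>, 2\<alpha>)) = 1\<close> for \<open>\<alpha> \<in> A\<close> and \<open>\<beta> \<in> \<B>\<close>, expanding the squares shows that
  \<open>\<theta>\<^sub>\<alpha>\<^sub>,\<^sub>\<beta>\<^sup>2 - \<theta>\<^sub>\<alpha>\<^sub>,\<^sub>0\<^sup>2\<close> is the sum of \<open>(e(B(\<beta>,S)) - 1) e(\<tau>(Q(S) + Q(D))/2 + B(S,z))\<close>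
  over all integral \<open>S, D\<close> with \<open>S - D \<equiv> 2\<alpha> (mod 2)\<close>. The first factor vanishes
  unless \<open>S\<^sub>2\<close> or \<open>S\<^sub>1 + S\<^sub>3\<close> is odd, and for such \<open>S\<close> an involutive isometry of \<open>A\<^sub>3\<close>
  (swapping the outer coordinates if \<open>S\<^sub>1 + S\<^sub>3\<close> is odd, \<open>D \<mapsto> (D\<^sub>2 - D\<^sub>1, D\<^sub>2, D\<^sub>2 - D\<^sub>3)\<close>
  otherwise) shifts the class of \<open>D\<close> mod 2 by \<open>(1,0,1)\<close>. This matches the sums for
  \<open>\<alpha> = 0\<close> and \<open>\<alpha> = (1/2,0,1/2)\<close> term by term.
\<close>

section \<open>The exponential and the quadratic forms\<close>

lemma e_add: "e (x + y) = e x * e y"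
  unfolding e_def by (simp add: distrib_left exp_add)

lemma e_zero [simp]: "e 0 = 1"
  by (simp add: e_def)

lemma e_Ints: "x \<in> \<int> \<Longrightarrow> e x = 1"
  unfolding e_def by (auto elim!: Ints_cases simp: exp_eq_1)

lemma e_half: "e (1/2) = -1" and e_minus_half: "e (- (1/2)) = -1"
  unfolding e_def by (simp_all add: exp_minus)

lemma norm_e: "norm (e w) = exp (-2 * pi * Im w)"
  unfolding e_def by simp

lemma e_imag: "e (\<i> * of_real r) = of_real (exp (-2 * pi * r))"
  unfolding e_def by (simp add: algebra_simps flip: exp_of_real)

lemma of_rat_complex: "(of_rat q :: complex) = of_real (of_rat q)"
  by (cases q) (simp add: of_rat_rat)

lemma vadd_eq_plus: "vadd x y = x + y"
  by (cases x; cases y) simp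

lemma ofZ_add: "ofZ (u + v) = ofZ u + ofZ v"
  by (cases u; cases v) simp

lemma ofZ_diff: "ofZ (u - v) = ofZ u - ofZ v"
  by (cases u; cases v) simp

lemma B_zero_left [simp]: "B (0, 0, 0) y = 0"
  by (cases y) simp

lemma B_zero_right [simp]: "B x (0, 0, 0) = 0"
  by (cases x) simp

lemma B_add_left: "B (x + y) z = B x z + B y z"
  by (cases x; cases y; cases z) (simp add: algebra_simps)

lemma B_add_right: "B x (y + z) = B x y + B x z"
  by (cases x; cases y; cases z) (simp add: algebra_simps)

lemma B_parallelogram: "B (x + y) (x + y) + B (x - y) (x - y) = 2 * (B x x + B y y)"
  by (cases x; cases y) (simp add: algebra_simps)

lemma Q_parallelogram: "Q (x + y) + Q (x - y) = 2 * (Q x + Q y)"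
  using B_parallelogram[of x y] unfolding Q_def by (simp add: field_simps)

fun Q_int :: "int \<times> int \<times> int \<Rightarrow> int" where
  "Q_int (u1, u2, u3) = u1\<^sup>2 + u2\<^sup>2 + u3\<^sup>2 - u1 * u2 - u2 * u3"

lemma Q_ofZ: "Q (ofZ u) = of_int (Q_int u)"
  by (cases u) (simp add: Q_def power2_eq_square field_simps)

section \<open>Absolute convergence of the theta series\<close>

lemma has_sum_product:
  fixes f :: "'a \<Rightarrow> 'c::{banach, real_normed_field}" and g :: "'b \<Rightarrow> 'c"
  assumes "(\<lambda>x. norm (f x)) summable_on X" and "(\<lambda>y. norm (g y)) summable_on Y"
  shows "((\<lambda>(x, y). f x * g y) has_sum infsum f X * infsum g Y) (X \<times> Y)"
proof -
  have "(\<lambda>p. norm (case p of (x, y) \<Rightarrow> f x * g y)) summable_on X \<times> Y"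
  proof (rule summable_on_SigmaI)
    show "((\<lambda>y. norm (case (x, y) of (x, y) \<Rightarrow> f x * g y))
            has_sum norm (f x) * infsum (\<lambda>y. norm (g y)) Y) Y" for x
      using has_sum_cmult_right[OF has_sum_infsum[OF assms(2)]] by (simp add: norm_mult)
    show "(\<lambda>x. norm (f x) * infsum (\<lambda>y. norm (g y)) Y) summable_on X"
      using assms(1) by (rule summable_on_cmult_left)
  qed simp
  then have summable: "(\<lambda>(x, y). f x * g y) summable_on X \<times> Y"
    by (rule abs_summable_summable)
  have "infsum (\<lambda>(x, y). f x * g y) (X \<times> Y) = infsum (\<lambda>x. infsum (\<lambda>y. f x * g y) Y) X"
    using infsum_Sigma_banach[OF summable] by simp
  also have "\<dots> = infsum f X * infsum g Y"
    by (simp add: infsum_cmult_right' infsum_cmult_left')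
  finally show ?thesis
    using has_sum_infsum[OF summable] by simp
qed

lemma summable_on_product_nonneg:
  fixes f :: "'a \<Rightarrow> real" and g :: "'b \<Rightarrow> real"
  assumes "\<And>x. 0 \<le> f x" and "\<And>y. 0 \<le> g y" and "f summable_on X" and "g summable_on Y"
  shows "(\<lambda>(x, y). f x * g y) summable_on X \<times> Y"
  using has_sum_product[of f X g Y] assms by (auto dest: has_sum_imp_summable)

lemma summable_on_exp_neg_abs_int: "(\<lambda>n::int. exp (- \<bar>real_of_int n\<bar>)) summable_on UNIV"
proof -
  have "summable (\<lambda>n. exp (-1::real) ^ n)"
    by (rule summable_geometric) simp
  then have geometric: "(\<lambda>n::nat. exp (- real n)) summable_on UNIV"
    by (simp add: summable_on_UNIV_nonneg_real_iff flip: exp_of_nat_mult)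
  have "(\<lambda>n::int. exp (- \<bar>real_of_int n\<bar>)) summable_on range int"
    using geometric by (subst summable_on_reindex) (auto simp: o_def)
  moreover have "(\<lambda>n::int. exp (- \<bar>real_of_int n\<bar>)) summable_on range (\<lambda>n. - int n)"
    using geometric by (subst summable_on_reindex) (auto simp: o_def inj_on_def)
  moreover have "range int \<union> range (\<lambda>n. - int n) = UNIV"
    by (auto intro: int_cases2)
  ultimately show ?thesis
    by (metis summable_on_union)
qed

lemma summable_on_exp_neg_norm1_int3:
  "(\<lambda>(v1, v2, v3). exp (- (\<bar>real_of_int v1\<bar> + \<bar>real_of_int v2\<bar> + \<bar>real_of_int v3\<bar>))) summable_on UNIV"
proof -
  let ?f = "\<lambda>n::int. exp (- \<bar>real_of_int n\<bar>)"
  have "(\<lambda>(v2, v3). ?f v2 * ?f v3) summable_on UNIV"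
    using summable_on_product_nonneg[OF _ _ summable_on_exp_neg_abs_int summable_on_exp_neg_abs_int]
    by simp
  then have "(\<lambda>(v1, w). ?f v1 * (\<lambda>(v2, v3). ?f v2 * ?f v3) w) summable_on UNIV \<times> UNIV"
    by (intro summable_on_product_nonneg[OF _ _ summable_on_exp_neg_abs_int]) auto
  then show ?thesis
    by (simp add: case_prod_unfold algebra_simps flip: exp_add)
qed

definition theta_term :: "rat \<times> rat \<times> rat \<Rightarrow> rat \<times> rat \<times> rat \<Rightarrow> complex \<Rightarrow> cvec3 \<Rightarrow> int \<times> int \<times> int \<Rightarrow> complex" where
  "theta_term \<alpha> \<beta> \<tau> z v =
     e (B (ofQ \<beta>) (ofZ v)) * e (\<tau> * Q (vadd (ofQ \<alpha>) (ofZ v)) + B (vadd (ofQ \<alpha>) (ofZ v)) z)"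

lemma theta_eq_infsum: "theta \<alpha> \<beta> \<tau> z = infsum (theta_term \<alpha> \<beta> \<tau> z) UNIV"
  unfolding theta_def theta_term_def ..

fun B_real :: "real \<times> real \<times> real \<Rightarrow> real \<times> real \<times> real \<Rightarrow> real" where
  "B_real (x1, x2, x3) (y1, y2, y3) =
     2*x1*y1 - x1*y2 - x2*y1 + 2*x2*y2 - x2*y3 - x3*y2 + 2*x3*y3"

definition Q_real :: "real \<times> real \<times> real \<Rightarrow> real" where
  "Q_real x = B_real x x / 2"

fun of_real3 :: "real \<times> real \<times> real \<Rightarrow> cvec3" where
  "of_real3 (x1, x2, x3) = (of_real x1, of_real x2, of_real x3)"

fun imag3 :: "real \<times> real \<times> real \<Rightarrow> cvec3" where
  "imag3 (y1, y2, y3) = (\<i> * of_real y1, \<i> * of_real y2, \<i> * of_real y3)"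

fun Im3 :: "cvec3 \<Rightarrow> real \<times> real \<times> real" where
  "Im3 (z1, z2, z3) = (Im z1, Im z2, Im z3)"

fun lattice_point :: "rat \<times> rat \<times> rat \<Rightarrow> int \<times> int \<times> int \<Rightarrow> real \<times> real \<times> real" where
  "lattice_point (a1, a2, a3) (v1, v2, v3) =
     (of_rat a1 + of_int v1, of_rat a2 + of_int v2, of_rat a3 + of_int v3)"

lemma vadd_ofQ_ofZ: "vadd (ofQ \<alpha>) (ofZ v) = of_real3 (lattice_point \<alpha> v)"
  by (cases \<alpha>; cases v) (simp add: of_rat_complex)

lemma B_of_real3: "B (of_real3 x) (of_real3 y) = of_real (B_real x y)"
  by (cases x; cases y) simp

lemma Im_B_of_real3: "Im (B (of_real3 x) z) = B_real x (Im3 z)"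
  by (cases x; cases z) simp

lemma B_of_real3_imag3: "B (of_real3 x) (imag3 y) = \<i> * of_real (B_real x y)"
  by (cases x; cases y) (simp add: algebra_simps)

lemma Q_of_real3: "Q (of_real3 x) = of_real (Q_real x)"
  unfolding Q_def Q_real_def by (simp add: B_of_real3)

lemma Q_real_diff: "Q_real (x - p) = Q_real x - B_real x p + Q_real p"
  unfolding Q_real_def by (cases x; cases p) (simp add: field_simps)

lemma B_real_scaleR_right: "B_real x (r *\<^sub>R p) = r * B_real x p"
  by (cases x; cases p) (simp add: algebra_simps)

lemma Im_B_ofQ_ofZ: "Im (B (ofQ \<beta>) (ofZ v)) = 0"
  by (cases \<beta>; cases v) (simp add: of_rat_complex)

lemma norm_theta_term:
  "norm (theta_term \<alpha> \<beta> \<tau> z v) =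
     exp (-2 * pi * (Im \<tau> * Q_real (lattice_point \<alpha> v) + B_real (lattice_point \<alpha> v) (Im3 z)))"
  unfolding theta_term_def norm_mult norm_e vadd_ofQ_ofZ
  by (simp add: Im_B_ofQ_ofZ Q_of_real3 Im_B_of_real3)

fun norm1 :: "real \<times> real \<times> real \<Rightarrow> real" where
  "norm1 (x1, x2, x3) = \<bar>x1\<bar> + \<bar>x2\<bar> + \<bar>x3\<bar>"

lemma Q_real_ge: "norm1 x ^ 2 / 12 \<le> Q_real x"
proof (cases x)
  case (fields x1 x2 x3)
  have "6 * Q_real x - 3 * (x1\<^sup>2 + x2\<^sup>2 + x3\<^sup>2) / 2
      = ((3*x1 - 2*x2)\<^sup>2 + (3*x3 - 2*x2)\<^sup>2 + x2\<^sup>2) / 2"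
    unfolding Q_real_def fields by (simp add: power2_eq_square field_simps)
  moreover have "norm1 x ^ 2 \<le> 3 * (x1\<^sup>2 + x2\<^sup>2 + x3\<^sup>2)"
  proof -
    have "0 \<le> (\<bar>x1\<bar> - \<bar>x2\<bar>)\<^sup>2 + (\<bar>x2\<bar> - \<bar>x3\<bar>)\<^sup>2 + (\<bar>x1\<bar> - \<bar>x3\<bar>)\<^sup>2"
      by simp
    then show ?thesis
      unfolding fields by (simp add: power2_eq_square algebra_simps)
  qed
  moreover have "0 \<le> ((3*x1 - 2*x2)\<^sup>2 + (3*x3 - 2*x2)\<^sup>2 + x2\<^sup>2) / 2"
    by simp
  ultimately show ?thesis
    by linarith
qed

lemma B_real_abs_le: "\<bar>B_real x y\<bar> \<le> 4 * norm1 y * norm1 x"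
proof (cases x; cases y)
  fix x1 x2 x3 y1 y2 y3
  assume x: "x = (x1, x2, x3)" and y: "y = (y1, y2, y3)"
  define M where "M = 4 * norm1 y"
  have "B_real x y = x1 * (2*y1 - y2) + x2 * (-y1 + 2*y2 - y3) + x3 * (-y2 + 2*y3)"
    unfolding x y by (simp add: algebra_simps)
  also have "\<bar>\<dots>\<bar> \<le> \<bar>x1\<bar> * M + \<bar>x2\<bar> * M + \<bar>x3\<bar> * M"
  proof -
    have "\<bar>2*y1 - y2\<bar> \<le> M" "\<bar>-y1 + 2*y2 - y3\<bar> \<le> M" "\<bar>-y2 + 2*y3\<bar> \<le> M"
      unfolding M_def y by auto
    then have "\<bar>x1 * (2*y1 - y2)\<bar> \<le> \<bar>x1\<bar> * M" "\<bar>x2 * (-y1 + 2*y2 - y3)\<bar> \<le> \<bar>x2\<bar> * M"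
        "\<bar>x3 * (-y2 + 2*y3)\<bar> \<le> \<bar>x3\<bar> * M"
      unfolding abs_mult by (simp_all add: mult_left_mono)
    then show ?thesis
      by linarith
  qed
  finally show ?thesis
    unfolding M_def x by (simp add: algebra_simps)
qed

lemma gauss_exponent_ge:
  assumes "t > 0"
  shows "norm1 x - 3 * (4 * norm1 y + 1)\<^sup>2 / t \<le> t * Q_real x + B_real x y"
proof -
  define R M where "R = norm1 x" and "M = 4 * norm1 y"
  have "t * R\<^sup>2 / 12 \<le> t * Q_real x"
    using Q_real_ge[of x] assms unfolding R_def by (simp add: mult_left_mono)
  moreover have "- (M * R) \<le> B_real x y"
    using B_real_abs_le[of x y] unfolding M_def R_def by linarith
  moreover have "R - 3 * (M + 1)\<^sup>2 / t \<le> t * R\<^sup>2 / 12 - M * R"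
  proof -
    have "0 \<le> (t * R / 6 - (M + 1))\<^sup>2 * (3 / t)"
      using assms by simp
    then show ?thesis
      using assms by (simp add: power2_eq_square field_simps)
  qed
  ultimately show ?thesis
    unfolding R_def M_def by linarith
qed

lemma norm1_lattice_point_ge:
  "\<bar>real_of_int v1\<bar> + \<bar>real_of_int v2\<bar> + \<bar>real_of_int v3\<bar> - norm1 (lattice_point \<alpha> (0, 0, 0))
     \<le> norm1 (lattice_point \<alpha> (v1, v2, v3))"
  by (cases \<alpha>) (simp only: lattice_point.simps norm1.simps; arith)

lemma gaussian_summable:
  assumes "t > 0"
  shows "(\<lambda>v. exp (-2 * pi * (t * Q_real (lattice_point \<alpha> v) + B_real (lattice_point \<alpha> v) y)))
           summable_on UNIV"
proof (rule summable_on_comparison_test)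
  define K where "K = 3 * (4 * norm1 y + 1)\<^sup>2 / t + norm1 (lattice_point \<alpha> (0, 0, 0))"
  let ?g = "\<lambda>(v1, v2, v3). exp (- (\<bar>real_of_int v1\<bar> + \<bar>real_of_int v2\<bar> + \<bar>real_of_int v3\<bar>))"
  show "(\<lambda>v. exp (2 * pi * K) * ?g v) summable_on UNIV"
    by (rule summable_on_cmult_right) (rule summable_on_exp_neg_norm1_int3)
  fix v :: "int \<times> int \<times> int"
  obtain v1 v2 v3 where v: "v = (v1, v2, v3)"
    by (cases v)
  define V where "V = \<bar>real_of_int v1\<bar> + \<bar>real_of_int v2\<bar> + \<bar>real_of_int v3\<bar>"
  have "V - K \<le> t * Q_real (lattice_point \<alpha> v) + B_real (lattice_point \<alpha> v) y"
    using gauss_exponent_ge[OF assms, of "lattice_point \<alpha> v" y] norm1_lattice_point_ge[of v1 v2 v3 \<alpha>]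
    unfolding K_def V_def v by linarith
  then have "2 * pi * (V - K) \<le> 2 * pi * (t * Q_real (lattice_point \<alpha> v) + B_real (lattice_point \<alpha> v) y)"
    by (rule mult_left_mono) simp
  moreover have "1 * V \<le> 2 * pi * V"
    using pi_gt3 by (intro mult_right_mono) (auto simp: V_def)
  ultimately have "-2 * pi * (t * Q_real (lattice_point \<alpha> v) + B_real (lattice_point \<alpha> v) y) \<le> 2 * pi * K - V"
    by (simp add: algebra_simps)
  then show "exp (-2 * pi * (t * Q_real (lattice_point \<alpha> v) + B_real (lattice_point \<alpha> v) y))
      \<le> exp (2 * pi * K) * ?g v"
    unfolding v V_def by (simp flip: exp_add)
qed simp

lemma theta_term_abs_summable:
  "Im \<tau> > 0 \<Longrightarrow> (\<lambda>v. norm (theta_term \<alpha> \<beta> \<tau> z v)) summable_on UNIV"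
  unfolding norm_theta_term by (rule gaussian_summable)

section \<open>Squares of theta functions as sums over pairs of lattice points\<close>

lemma has_sum_diff:
  fixes f g :: "'a \<Rightarrow> 'b::{topological_semigroup_mult, topological_comm_monoid_add, ring_1}"
  assumes "(f has_sum a) X" and "(g has_sum b) X"
  shows "((\<lambda>x. f x - g x) has_sum a - b) X"
  using has_sum_add[OF assms(1) has_sum_uminusI[OF assms(2)]] by simp

definition gauss_pair :: "complex \<Rightarrow> cvec3 \<Rightarrow> int \<times> int \<times> int \<Rightarrow> int \<times> int \<times> int \<Rightarrow> complex" where
  "gauss_pair \<tau> z S D = e (\<tau> * (of_int (Q_int S) + of_int (Q_int D)) / 2 + B (ofZ S) z)"

lemma theta_term_mult:
  assumes "ofQ \<alpha> + ofQ \<alpha> = ofZ c"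
  shows "theta_term \<alpha> \<beta> \<tau> z v * theta_term \<alpha> \<beta> \<tau> z w
    = e (B (ofQ \<beta>) (ofZ (v + w))) * gauss_pair \<tau> z (c + v + w) (v - w)"
proof -
  define x y where "x = ofQ \<alpha> + ofZ v" and "y = ofQ \<alpha> + ofZ w"
  have sum: "x + y = ofZ (c + v + w)" and diff: "x - y = ofZ (v - w)"
    using assms unfolding x_def y_def ofZ_add ofZ_diff by (simp_all add: algebra_simps)
  have "Q x + Q y = (of_int (Q_int (c + v + w)) + of_int (Q_int (v - w))) / 2"
    using Q_parallelogram[of x y] unfolding sum diff Q_ofZ by simp
  moreover have "\<tau> * Q x + B x z + (\<tau> * Q y + B y z) = \<tau> * (Q x + Q y) + B (x + y) z"
    by (simp add: B_add_left algebra_simps)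
  ultimately have "\<tau> * Q x + B x z + (\<tau> * Q y + B y z)
      = \<tau> * (of_int (Q_int (c + v + w)) + of_int (Q_int (v - w))) / 2 + B (ofZ (c + v + w)) z"
    unfolding sum by simp
  moreover have "theta_term \<alpha> \<beta> \<tau> z v * theta_term \<alpha> \<beta> \<tau> z w
      = e (B (ofQ \<beta>) (ofZ v) + B (ofQ \<beta>) (ofZ w)) * e (\<tau> * Q x + B x z + (\<tau> * Q y + B y z))"
    unfolding theta_term_def vadd_eq_plus x_def y_def e_add by (simp only: mult_ac)
  ultimately show ?thesis
    unfolding gauss_pair_def ofZ_add B_add_right by simp
qed

text \<open>For \<open>c = 2\<alpha>\<close>, the pairs \<open>(S, D) = (x + y, x - y)\<close> of points \<open>x = \<alpha> + v, y = \<alpha> + w\<close>.\<close>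

definition pair_index :: "int \<times> int \<times> int \<Rightarrow> ((int \<times> int \<times> int) \<times> (int \<times> int \<times> int)) set" where
  "pair_index c = (\<lambda>(v, w). (c + v + w, v - w)) ` UNIV"

lemma pair_index_iff:
  "((s1, s2, s3), (d1, d2, d3)) \<in> pair_index (c1, c2, c3) \<longleftrightarrow>
     even (s1 - d1 - c1) \<and> even (s2 - d2 - c2) \<and> even (s3 - d3 - c3)"
proof
  assume "((s1, s2, s3), (d1, d2, d3)) \<in> pair_index (c1, c2, c3)"
  then obtain v w where "((s1, s2, s3), (d1, d2, d3)) = ((c1, c2, c3) + v + w, v - w)"
    unfolding pair_index_def by auto
  then show "even (s1 - d1 - c1) \<and> even (s2 - d2 - c2) \<and> even (s3 - d3 - c3)"
    by (cases v; cases w) (simp; presburger)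
next
  assume "even (s1 - d1 - c1) \<and> even (s2 - d2 - c2) \<and> even (s3 - d3 - c3)"
  then obtain w1 w2 w3 where "s1 - d1 - c1 = 2 * w1" "s2 - d2 - c2 = 2 * w2" "s3 - d3 - c3 = 2 * w3"
    by (elim conjE evenE) blast
  then have "((s1, s2, s3), (d1, d2, d3)) = (\<lambda>(v, w). ((c1, c2, c3) + v + w, v - w))
      ((w1 + d1, w2 + d2, w3 + d3), (w1, w2, w3))"
    by simp
  then show "((s1, s2, s3), (d1, d2, d3)) \<in> pair_index (c1, c2, c3)"
    unfolding pair_index_def by blast
qed

lemma has_sum_theta_sq:
  assumes "Im \<tau> > 0" and "ofQ \<alpha> + ofQ \<alpha> = ofZ c"
  shows "((\<lambda>(S, D). e (B (ofQ \<beta>) (ofZ (S - c))) * gauss_pair \<tau> z S D)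
           has_sum theta \<alpha> \<beta> \<tau> z ^ 2) (pair_index c)"
proof -
  have inj: "inj (\<lambda>(v, w). (c + v + w, v - w))"
    by (rule injI) (auto simp: prod_eq_iff)
  have "((\<lambda>(v, w). theta_term \<alpha> \<beta> \<tau> z v * theta_term \<alpha> \<beta> \<tau> z w) has_sum theta \<alpha> \<beta> \<tau> z ^ 2) UNIV"
    using has_sum_product[OF theta_term_abs_summable theta_term_abs_summable] assms(1)
    by (simp add: theta_eq_infsum power2_eq_square)
  then show ?thesis
    unfolding pair_index_def has_sum_reindex[OF inj]
    by (simp add: o_def case_prod_unfold theta_term_mult[OF assms(2)])
qed

lemma has_sum_theta_sq_diff:
  assumes "Im \<tau> > 0" and "ofQ \<alpha> + ofQ \<alpha> = ofZ c" and "e (B (ofQ \<beta>) (ofZ c)) = 1"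
  shows "((\<lambda>(S, D). (e (B (ofQ \<beta>) (ofZ S)) - 1) * gauss_pair \<tau> z S D)
           has_sum theta \<alpha> \<beta> \<tau> z ^ 2 - theta \<alpha> (0, 0, 0) \<tau> z ^ 2) (pair_index c)"
proof -
  have "e (B (ofQ \<beta>) (ofZ (S - c))) = e (B (ofQ \<beta>) (ofZ S))" for S
    using e_add[of "B (ofQ \<beta>) (ofZ (S - c))" "B (ofQ \<beta>) (ofZ c)"] assms(3)
    by (simp add: B_add_right[symmetric] ofZ_add[symmetric])
  then show ?thesis
    using has_sum_diff[OF has_sum_theta_sq[OF assms(1,2), where \<beta> = \<beta> and z = z]
                          has_sum_theta_sq[OF assms(1,2), where \<beta> = "(0, 0, 0)" and z = z]]
    by (simp add: case_prod_unfold algebra_simps)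
qed

fun odd_class :: "int \<times> int \<times> int \<Rightarrow> bool" where
  "odd_class (s1, s2, s3) \<longleftrightarrow> odd s2 \<or> odd (s1 + s3)"

lemma e_B_setB_eq_1:
  assumes "\<beta> \<in> setB" and "\<not> odd_class S"
  shows "e (B (ofQ \<beta>) (ofZ S)) = 1"
proof -
  obtain s1 s2 s3 where S: "S = (s1, s2, s3)"
    by (cases S)
  have "even s2" "even (s1 + s3)"
    using assms(2) unfolding S by auto
  obtain m n where s2: "s2 = 2 * m" and s13: "s1 + s3 = 2 * n"
    using \<open>even s2\<close> \<open>even (s1 + s3)\<close> by (elim evenE)
  have s1: "s1 = 2 * n - s3"
    using s13 by simp
  have "B (ofQ \<beta>) (ofZ (s1, s2, s3)) \<in> \<int>"
    using assms(1) unfolding setB_def S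
    by (auto simp: s1 s2 of_rat_divide algebra_simps intro!: Ints_diff Ints_add Ints_mult)
  then show ?thesis
    unfolding S by (rule e_Ints)
qed

lemma e_B_setB_101: "\<beta> \<in> setB \<Longrightarrow> e (B (ofQ \<beta>) (1, 0, 1)) = 1"
  using e_B_setB_eq_1[of \<beta> "(1, 0, 1)"] by simp

fun pair_flip :: "(int \<times> int \<times> int) \<times> (int \<times> int \<times> int) \<Rightarrow> (int \<times> int \<times> int) \<times> (int \<times> int \<times> int)" where
  "pair_flip ((s1, s2, s3), (d1, d2, d3)) =
     ((s1, s2, s3), if odd (s1 + s3) then (d3, d2, d1) else (d2 - d1, d2, d2 - d3))"

lemma pair_flip_pair_flip: "pair_flip (pair_flip p) = p"
  by (cases p) auto

lemma fst_pair_flip: "fst (pair_flip p) = fst p"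
  by (cases p) auto

lemma Q_int_snd_pair_flip: "Q_int (snd (pair_flip p)) = Q_int (snd p)"
  by (cases p) (auto simp: power2_eq_square algebra_simps)

lemma pair_flip_swaps_index:
  assumes "odd_class S"
  shows "(S, D) \<in> pair_index (0, 0, 0) \<longleftrightarrow> pair_flip (S, D) \<in> pair_index (1, 0, 1)"
  using assms by (cases S; cases D) (auto simp: pair_index_iff; presburger)

lemma has_sum_pair_index_shift:
  fixes \<beta> :: "rat \<times> rat \<times> rat" and \<tau> :: complex and z :: cvec3
  defines "h \<equiv> \<lambda>(S, D). (e (B (ofQ \<beta>) (ofZ S)) - 1) * gauss_pair \<tau> z S D"
  assumes "\<beta> \<in> setB" and "(h has_sum x) (pair_index (0, 0, 0))"
  shows "(h has_sum x) (pair_index (1, 0, 1))"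
proof -
  define P :: "((int \<times> int \<times> int) \<times> (int \<times> int \<times> int)) set"
    where "P = {(S, D). odd_class S}"
  have vanish: "h p = 0" if "p \<notin> P" for p
    using that e_B_setB_eq_1[OF assms(2)] unfolding h_def P_def by (auto simp: case_prod_unfold)
  have "h (pair_flip p) = h p" for p
    using fst_pair_flip[of p] Q_int_snd_pair_flip[of p] unfolding h_def gauss_pair_def
    by (simp add: case_prod_unfold)
  then have "(h has_sum x) (pair_index (0, 0, 0) \<inter> P) \<longleftrightarrow> (h has_sum x) (pair_index (1, 0, 1) \<inter> P)"
    by (intro has_sum_reindex_bij_witness[where i = pair_flip and j = pair_flip])
      (auto simp: P_def pair_flip_pair_flip fst_pair_flip pair_flip_swaps_index)
  moreover have "(h has_sum x) (pair_index c \<inter> P) \<longleftrightarrow> (h has_sum x) (pair_index c)" for c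
    by (rule has_sum_cong_neutral) (auto simp: vanish)
  ultimately show ?thesis
    using assms(3) by simp
qed

lemma theta_sq_diff_shift:
  assumes "\<beta> \<in> setB" and "Im \<tau> > 0"
  shows "theta (1/2, 0, 1/2) \<beta> \<tau> z ^ 2 - theta (1/2, 0, 1/2) (0, 0, 0) \<tau> z ^ 2
       = theta (0, 0, 0) \<beta> \<tau> z ^ 2 - theta (0, 0, 0) (0, 0, 0) \<tau> z ^ 2"
proof -
  have "((\<lambda>(S, D). (e (B (ofQ \<beta>) (ofZ S)) - 1) * gauss_pair \<tau> z S D)
          has_sum theta (0, 0, 0) \<beta> \<tau> z ^ 2 - theta (0, 0, 0) (0, 0, 0) \<tau> z ^ 2) (pair_index (0, 0, 0))"
    by (rule has_sum_theta_sq_diff[OF assms(2)]) simp_all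
  then have "((\<lambda>(S, D). (e (B (ofQ \<beta>) (ofZ S)) - 1) * gauss_pair \<tau> z S D)
          has_sum theta (0, 0, 0) \<beta> \<tau> z ^ 2 - theta (0, 0, 0) (0, 0, 0) \<tau> z ^ 2) (pair_index (1, 0, 1))"
    by (rule has_sum_pair_index_shift[OF assms(1)])
  moreover have "((\<lambda>(S, D). (e (B (ofQ \<beta>) (ofZ S)) - 1) * gauss_pair \<tau> z S D)
          has_sum theta (1/2, 0, 1/2) \<beta> \<tau> z ^ 2 - theta (1/2, 0, 1/2) (0, 0, 0) \<tau> z ^ 2) (pair_index (1, 0, 1))"
    by (rule has_sum_theta_sq_diff[OF assms(2)]) (simp_all add: of_rat_divide e_B_setB_101[OF assms(1)])
  ultimately show ?thesis
    by (rule has_sum_unique[rotated])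
qed

section \<open>Short vectors of the A3 lattice\<close>

definition roots_and_zero :: "(int \<times> int \<times> int) set" where
  "roots_and_zero = {(0,0,0), (1,0,0), (-1,0,0), (0,1,0), (0,-1,0), (0,0,1), (0,0,-1),
     (1,1,0), (-1,-1,0), (0,1,1), (0,-1,-1), (1,1,1), (-1,-1,-1)}"

lemma sq_le_2_cases: "(x::int)\<^sup>2 \<le> 2 \<Longrightarrow> x = -1 \<or> x = 0 \<or> x = 1"
proof -
  assume "x\<^sup>2 \<le> 2"
  moreover have "2 * 2 \<le> \<bar>x\<bar> * \<bar>x\<bar>" if "2 \<le> \<bar>x\<bar>"
    using that by (intro mult_mono) auto
  ultimately have "\<bar>x\<bar> < 2"
    by (force simp: power2_eq_square)
  then show ?thesis
    by auto
qed

lemma Q_int_le_1: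
  assumes "Q_int u \<le> 1"
  shows "u \<in> roots_and_zero"
proof (cases u)
  case (fields u1 u2 u3)
  have "(u1 - u2)\<^sup>2 + (u2 - u3)\<^sup>2 + u1\<^sup>2 + u3\<^sup>2 = 2 * Q_int u"
    unfolding fields by (simp add: power2_eq_square algebra_simps)
  then have "(u1 - u2)\<^sup>2 + (u2 - u3)\<^sup>2 + u1\<^sup>2 + u3\<^sup>2 \<le> 2"
    using assms by linarith
  moreover have "0 \<le> (u1 - u2)\<^sup>2" "0 \<le> (u2 - u3)\<^sup>2" "0 \<le> u1\<^sup>2" "0 \<le> u3\<^sup>2"
    by simp_all
  ultimately have "u1 = -1 \<or> u1 = 0 \<or> u1 = 1" "u3 = -1 \<or> u3 = 0 \<or> u3 = 1"
      "u1 - u2 = -1 \<or> u1 - u2 = 0 \<or> u1 - u2 = 1"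
    by (intro sq_le_2_cases; linarith)+
  then have "u1 = -1 \<or> u1 = 0 \<or> u1 = 1" "u3 = -1 \<or> u3 = 0 \<or> u3 = 1"
      "u2 = -2 \<or> u2 = -1 \<or> u2 = 0 \<or> u2 = 1 \<or> u2 = 2"
    by arith+
  then show ?thesis
    using assms unfolding fields roots_and_zero_def by (elim disjE) (simp_all add: power2_eq_square)
qed

lemma Q_int_le_0:
  assumes "Q_int u \<le> 0"
  shows "u = (0, 0, 0)"
proof -
  have "u \<in> roots_and_zero"
    using assms by (intro Q_int_le_1) simp
  then show ?thesis
    using assms unfolding roots_and_zero_def by (elim insertE emptyE) simp_all
qed

lemma Q_int_sublevel_0_eqI:
  assumes "\<And>v1 v2 v3. c + (v1, v2, v3) + (v1, v2, v3) = (0, 0, 0) \<Longrightarrow> (v1, v2, v3) \<in> N"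
    and "\<And>v. v \<in> N \<Longrightarrow> c + v + v = (0, 0, 0)"
  shows "{v. Q_int (c + v + v) \<le> 0} = N"
proof (intro set_eqI iffI)
  fix v :: "int \<times> int \<times> int"
  assume "v \<in> {v. Q_int (c + v + v) \<le> 0}"
  then have "c + v + v = (0, 0, 0)"
    by (intro Q_int_le_0) simp
  then show "v \<in> N"
    using assms(1) by (cases v) simp
qed (use assms(2) in auto)

lemma Q_int_sublevel_1_eqI:
  assumes "\<And>v1 v2 v3. c + (v1, v2, v3) + (v1, v2, v3) \<in> roots_and_zero \<Longrightarrow> (v1, v2, v3) \<in> N"
    and "\<And>v. v \<in> N \<Longrightarrow> Q_int (c + v + v) \<le> 1"
  shows "{v. Q_int (c + v + v) \<le> 1} = N"
proof (intro set_eqI iffI)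
  fix v :: "int \<times> int \<times> int"
  assume "v \<in> {v. Q_int (c + v + v) \<le> 1}"
  then have "c + v + v \<in> roots_and_zero"
    by (intro Q_int_le_1) simp
  then show "v \<in> N"
    using assms(1) by (cases v) simp
qed (use assms(2) in auto)

lemma Q_int_sublevel_sets:
  "{v. Q_int ((0,0,0) + v + v) \<le> 0} = {(0,0,0)}"
  "{v. Q_int ((1,0,1) + v + v) \<le> 0} = {}"
  "{v. Q_int ((-1,0,-1) + v + v) \<le> 0} = {}"
  "{v. Q_int ((-1,0,0) + v + v) \<le> 1} = {(0,0,0), (1,0,0)}"
  "{v. Q_int ((0,0,1) + v + v) \<le> 1} = {(0,0,0), (0,0,-1)}"
  "{v. Q_int ((0,-1,0) + v + v) \<le> 1} = {(0,0,0), (0,1,0)}"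
  "{v. Q_int ((1,-1,1) + v + v) \<le> 1} = {(0,1,0), (-1,0,-1)}"
  "{v. Q_int ((-1,-1,0) + v + v) \<le> 1} = {(0,0,0), (1,1,0)}"
  "{v. Q_int ((0,-1,1) + v + v) \<le> 1} = {(0,1,0), (0,0,-1)}"
  by (rule Q_int_sublevel_0_eqI Q_int_sublevel_1_eqI; auto simp: roots_and_zero_def zero_prod_def; presburger)+

section \<open>Theta functions along vertical rays\<close>

lemma norm_infsum_exp_scaled_minus_le:
  fixes D :: "'a \<Rightarrow> real" and a :: "'a \<Rightarrow> complex"
  assumes "finite N" and zero: "\<And>v. v \<in> N \<Longrightarrow> D v = 0"
    and gap: "\<And>v. v \<notin> N \<Longrightarrow> \<delta> \<le> D v" and "\<delta> > 0"
    and bound: "\<And>v. norm (a v) \<le> 1" and summable: "(\<lambda>v. exp (- D v)) summable_on UNIV"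
    and "T \<ge> 1"
  shows "norm ((\<Sum>\<^sub>\<infinity>v. a v * exp (- (T * D v))) - (\<Sum>v\<in>N. a v))
           \<le> exp (- ((T - 1) * \<delta>)) * (\<Sum>\<^sub>\<infinity>v\<in>-N. exp (- D v))"
proof -
  define f where "f v = a v * exp (- (T * D v))" for v
  have norm_f: "norm (f v) \<le> exp (- (T * D v))" for v
    using bound[of v] unfolding f_def norm_mult by (simp add: mult_left_le_one_le)
  have "0 \<le> D v" for v
    using zero gap \<open>\<delta> > 0\<close> by (cases "v \<in> N") force+
  then have "norm (f v) \<le> exp (- D v)" for v
    using norm_f[of v] \<open>T \<ge> 1\<close> mult_right_mono[of 1 T "D v"] by (smt (verit) exp_le_cancel_iff)
  then have "(\<lambda>v. norm (f v)) summable_on UNIV"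
    by (intro summable_on_comparison_test[OF summable]) auto
  then have summable_f: "f summable_on X" "(\<lambda>v. norm (f v)) summable_on X" for X
    using summable_on_subset_banach abs_summable_summable by blast+
  have "(\<Sum>\<^sub>\<infinity>v. f v) = (\<Sum>\<^sub>\<infinity>v\<in>N. f v) + (\<Sum>\<^sub>\<infinity>v\<in>-N. f v)"
    using infsum_Un_disjoint[OF summable_f(1) summable_f(1), of N "-N"] by (simp add: Un_def)
  moreover have "(\<Sum>\<^sub>\<infinity>v\<in>N. f v) = (\<Sum>v\<in>N. a v)"
    using \<open>finite N\<close> by (simp add: f_def zero)
  moreover have "norm (\<Sum>\<^sub>\<infinity>v\<in>-N. f v) \<le> (\<Sum>\<^sub>\<infinity>v\<in>-N. exp (- ((T - 1) * \<delta>)) * exp (- D v))"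
  proof (rule order_trans[OF norm_infsum_bound[OF summable_f(2)]], rule infsum_mono)
    show "(\<lambda>v. exp (- ((T - 1) * \<delta>)) * exp (- D v)) summable_on - N"
      by (rule summable_on_cmult_right, rule summable_on_subset_banach[OF summable]) auto
    show "norm (f v) \<le> exp (- ((T - 1) * \<delta>)) * exp (- D v)" if "v \<in> - N" for v
    proof -
      have "(T - 1) * \<delta> \<le> (T - 1) * D v"
        using gap[of v] that \<open>T \<ge> 1\<close> by (intro mult_left_mono) auto
      then have "exp (- (T * D v)) \<le> exp (- ((T - 1) * \<delta>)) * exp (- D v)"
        by (simp add: algebra_simps flip: exp_add)
      then show ?thesis
        using norm_f[of v] by linarith
    qed
  qed (rule summable_f)
  ultimately show ?thesis
    unfolding f_def infsum_cmult_right' by simp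
qed

lemma tendsto_infsum_exp_scaled:
  fixes D :: "'a \<Rightarrow> real" and a :: "'a \<Rightarrow> complex"
  assumes "finite N" and "\<And>v. v \<in> N \<Longrightarrow> D v = 0"
    and "\<And>v. v \<notin> N \<Longrightarrow> \<delta> \<le> D v" and "\<delta> > 0"
    and "\<And>v. norm (a v) \<le> 1" and "(\<lambda>v. exp (- D v)) summable_on UNIV"
  shows "((\<lambda>T. \<Sum>\<^sub>\<infinity>v. a v * exp (- (T * D v))) \<longlongrightarrow> (\<Sum>v\<in>N. a v)) at_top"
proof (rule LIM_zero_cancel, rule Lim_null_comparison)
  define tail where "tail = (\<Sum>\<^sub>\<infinity>v\<in>-N. exp (- D v))"
  show "\<forall>\<^sub>F T in at_top. norm ((\<Sum>\<^sub>\<infinity>v. a v * exp (- (T * D v))) - (\<Sum>v\<in>N. a v))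
          \<le> exp (- ((T - 1) * \<delta>)) * tail"
    using eventually_ge_at_top[of 1] unfolding tail_def
    by eventually_elim (rule norm_infsum_exp_scaled_minus_le[OF assms])
  show "((\<lambda>T. exp (- ((T - 1) * \<delta>)) * tail) \<longlongrightarrow> 0) at_top"
    using \<open>\<delta> > 0\<close> by real_asymp
qed

fun half3 :: "int \<times> int \<times> int \<Rightarrow> real \<times> real \<times> real" where
  "half3 (u1, u2, u3) = (of_int u1 / 2, of_int u2 / 2, of_int u3 / 2)"

lemma Q_real_half3: "Q_real (half3 u) = of_int (Q_int u) / 4"
  unfolding Q_real_def by (cases u) (simp add: field_simps power2_eq_square)

lemma lattice_point_origin_minus_half3: "lattice_point (0, 0, 0) v - - half3 k = half3 (k + v + v)"
  by (cases k; cases v) (simp add: field_simps)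

lemma lattice_point_101_minus_half3:
  assumes "k' = (1, 0, 1) + k"
  shows "lattice_point (1/2, 0, 1/2) v - - half3 k = half3 (k' + v + v)"
  unfolding assms by (cases k; cases v) (simp add: field_simps of_rat_divide)

lemma theta_term_on_ray:
  "theta_term \<alpha> \<beta> (\<i> * of_real T) (imag3 (- T *\<^sub>R p)) v =
     e (B (ofQ \<beta>) (ofZ v)) * of_real (exp (-2 * pi * T * (Q_real (lattice_point \<alpha> v - p) - Q_real p)))"
proof -
  have arg: "\<i> * of_real T * Q (of_real3 (lattice_point \<alpha> v)) + B (of_real3 (lattice_point \<alpha> v)) (imag3 (- T *\<^sub>R p))
      = \<i> * of_real (T * (Q_real (lattice_point \<alpha> v - p) - Q_real p))"
    unfolding Q_of_real3 B_of_real3_imag3 Q_real_diff B_real_scaleR_right by (simp add: algebra_simps)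
  show ?thesis
    unfolding theta_term_def vadd_ofQ_ofZ arg e_imag by (simp add: algebra_simps)
qed

lemma theta_ray_limit:
  fixes k :: "int \<times> int \<times> int" and m :: int
  assumes centre: "\<And>v. lattice_point \<alpha> v - p = half3 (k + v + v)"
    and sublevel: "{v. Q_int (k + v + v) \<le> m} = N" and "finite N"
    and min: "\<forall>v\<in>N. Q_int (k + v + v) = m"
  shows "((\<lambda>T. theta \<alpha> \<beta> (\<i> * of_real T) (imag3 (- T *\<^sub>R p)) * of_real (exp (2 * pi * T * (m / 4 - Q_real p))))
           \<longlongrightarrow> (\<Sum>v\<in>N. e (B (ofQ \<beta>) (ofZ v)))) at_top"
proof -
  define D where "D v = pi / 2 * (Q_int (k + v + v) - m)" for v
  have Q_centre: "Q_real (lattice_point \<alpha> v - p) = m / 4 + D v / (2 * pi)" for v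
    unfolding centre Q_real_half3 D_def by (simp add: field_simps)
  have "theta \<alpha> \<beta> (\<i> * of_real T) (imag3 (- T *\<^sub>R p)) * of_real (exp (2 * pi * T * (m / 4 - Q_real p)))
      = (\<Sum>\<^sub>\<infinity>v. e (B (ofQ \<beta>) (ofZ v)) * exp (- (T * D v)))" for T
    unfolding theta_eq_infsum infsum_cmult_left'[symmetric] theta_term_on_ray
    by (intro infsum_cong) (simp add: Q_centre field_simps flip: of_real_mult exp_add)
  moreover have "((\<lambda>T. \<Sum>\<^sub>\<infinity>v. e (B (ofQ \<beta>) (ofZ v)) * exp (- (T * D v))) \<longlongrightarrow> (\<Sum>v\<in>N. e (B (ofQ \<beta>) (ofZ v)))) at_top"
  proof (rule tendsto_infsum_exp_scaled[OF \<open>finite N\<close>])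
    show "D v = 0" if "v \<in> N" for v
      using min that by (simp add: D_def)
    show "pi / 2 \<le> D v" if "v \<notin> N" for v
      using that unfolding sublevel[symmetric] by (simp add: D_def)
    show "norm (e (B (ofQ \<beta>) (ofZ v))) \<le> 1" for v
      by (simp add: norm_e Im_B_ofQ_ofZ)
    have "exp (- D v) = exp (2 * pi * (m / 4 - Q_real p)) *
        exp (-2 * pi * (1 * Q_real (lattice_point \<alpha> v) + B_real (lattice_point \<alpha> v) ((-1) *\<^sub>R p)))" for v
      using Q_centre[of v] unfolding Q_real_diff B_real_scaleR_right by (simp add: field_simps flip: exp_add)
    then show "(\<lambda>v. exp (- D v)) summable_on UNIV"
      using summable_on_cmult_right[OF gaussian_summable[of 1]] by simp
  qed simp
  ultimately show ?thesis
    by simp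
qed

lemma sum_F5:
  "(\<Sum>i<5. c i * F5 i \<tau> z) =
     c 0 * theta (0,0,0) (0,0,0) \<tau> z ^ 2 + c 1 * theta (1/2,0,1/2) (0,0,0) \<tau> z ^ 2
     + c 2 * theta (0,0,0) (0,1/2,0) \<tau> z ^ 2 + c 3 * theta (0,0,0) (1/2,0,0) \<tau> z ^ 2
     + c 4 * theta (0,0,0) (1/2,1/2,0) \<tau> z ^ 2"
  by (simp add: F5_def numeral_eq_Suc)

lemma F5_relation_at_half_lattice_point:
  fixes c :: "nat \<Rightarrow> complex" and k0 k1 :: "int \<times> int \<times> int" and m :: int
  assumes vanish: "\<forall>\<tau> z. Im \<tau> > 0 \<longrightarrow> (\<Sum>i<5. c i * F5 i \<tau> z) = 0"
    and sublevel: "{v. Q_int (k0 + v + v) \<le> m} = N0" "{v. Q_int (k1 + v + v) \<le> m} = N1"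
    and "k1 = (1,0,1) + k0"
    and N0: "finite N0" "\<forall>v\<in>N0. Q_int (k0 + v + v) = m"
    and N1: "finite N1" "\<forall>v\<in>N1. Q_int (k1 + v + v) = m"
  defines "L \<equiv> \<lambda>N \<beta>. \<Sum>v\<in>N. e (B (ofQ \<beta>) (ofZ v))"
  shows "c 0 * L N0 (0,0,0) ^ 2 + c 1 * L N1 (0,0,0) ^ 2 + c 2 * L N0 (0,1/2,0) ^ 2
           + c 3 * L N0 (1/2,0,0) ^ 2 + c 4 * L N0 (1/2,1/2,0) ^ 2 = 0"
proof -
  define p where "p = - half3 k0"
  define s where "s T = exp (2 * pi * T * (m / 4 - Q_real p))" for T
  define th where "th \<alpha> \<beta> T = theta \<alpha> \<beta> (\<i> * of_real T) (imag3 (- T *\<^sub>R p)) * of_real (s T)" for \<alpha> \<beta> T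
  have lim0: "(th (0,0,0) \<beta> \<longlongrightarrow> L N0 \<beta>) at_top" for \<beta>
    unfolding th_def s_def L_def p_def
    by (rule theta_ray_limit[OF lattice_point_origin_minus_half3 sublevel(1) N0])
  have lim1: "(th (1/2,0,1/2) \<beta> \<longlongrightarrow> L N1 \<beta>) at_top" for \<beta>
    unfolding th_def s_def L_def p_def
    by (rule theta_ray_limit[OF lattice_point_101_minus_half3[OF \<open>k1 = (1,0,1) + k0\<close>] sublevel(2) N1])
  let ?f = "\<lambda>T. c 0 * th (0,0,0) (0,0,0) T ^ 2 + c 1 * th (1/2,0,1/2) (0,0,0) T ^ 2 + c 2 * th (0,0,0) (0,1/2,0) T ^ 2
           + c 3 * th (0,0,0) (1/2,0,0) T ^ 2 + c 4 * th (0,0,0) (1/2,1/2,0) T ^ 2"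
  have "(?f \<longlongrightarrow> c 0 * L N0 (0,0,0) ^ 2 + c 1 * L N1 (0,0,0) ^ 2 + c 2 * L N0 (0,1/2,0) ^ 2
           + c 3 * L N0 (1/2,0,0) ^ 2 + c 4 * L N0 (1/2,1/2,0) ^ 2) at_top"
    by (intro tendsto_intros lim0 lim1)
  moreover have "\<forall>\<^sub>F T in at_top. ?f T = 0"
  proof (rule eventually_at_top_linorderI)
    fix T :: real
    assume "T \<ge> 1"
    then have "(\<Sum>i<5. c i * F5 i (\<i> * of_real T) (imag3 (- T *\<^sub>R p))) = 0"
      using vanish[rule_format, of "\<i> * of_real T" "imag3 (- T *\<^sub>R p)"] by simp
    moreover have "?f T = of_real (s T) ^ 2 * (\<Sum>i<5. c i * F5 i (\<i> * of_real T) (imag3 (- T *\<^sub>R p)))"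
      unfolding th_def sum_F5 by (simp add: algebra_simps)
    ultimately show "?f T = 0"
      by simp
  qed
  ultimately have "((\<lambda>T::real. 0) \<longlongrightarrow> c 0 * L N0 (0,0,0) ^ 2 + c 1 * L N1 (0,0,0) ^ 2
      + c 2 * L N0 (0,1/2,0) ^ 2 + c 3 * L N0 (1/2,0,0) ^ 2 + c 4 * L N0 (1/2,1/2,0) ^ 2) at_top"
    by (rule Lim_transform_eventually)
  then show ?thesis
    by (metis tendsto_const_iff trivial_limit_at_top_linorder)
qed

lemma F5_linearly_independent:
  assumes vanish: "\<forall>\<tau> z. Im \<tau> > 0 \<longrightarrow> (\<Sum>i<5. c i * F5 i \<tau> z) = 0"
  shows "\<forall>i<5. c i = 0"
proof -
  note relation = F5_relation_at_half_lattice_point[OF vanish]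
  note e_values = of_rat_divide e_half e_minus_half e_Ints
  \<comment> \<open>Centres \<open>p = -k\<^sub>0/2\<close> = \<open>0, (1/2,0,1/2), (1/2,0,0), (0,1/2,0), (1/2,1/2,0)\<close> in turn.\<close>
  have sum0: "c 0 + c 2 + c 3 + c 4 = 0"
    using relation[OF Q_int_sublevel_sets(1,2)] by (simp add: e_values)
  have c1: "c 1 = 0"
    using relation[OF Q_int_sublevel_sets(3,1)] by (simp add: e_values)
  have "c 0 + c 1 + c 3 = 0"
    using relation[OF Q_int_sublevel_sets(4,5)] by (simp add: e_values) (metis distrib_right mult_eq_0_iff zero_neq_numeral)
  moreover have "c 0 + c 1 + c 2 = 0"
    using relation[OF Q_int_sublevel_sets(6,7)] by (simp add: e_values) (metis distrib_right mult_eq_0_iff zero_neq_numeral)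
  moreover have "c 0 + c 1 + c 4 = 0"
    using relation[OF Q_int_sublevel_sets(8,9)] by (simp add: e_values) (metis distrib_right mult_eq_0_iff zero_neq_numeral)
  ultimately have "c 2 = - c 0" "c 3 = - c 0" "c 4 = - c 0"
    using c1 by (simp_all add: add_eq_0_iff)
  then have "c 0 = 0" "c 1 = 0" "c 2 = 0" "c 3 = 0" "c 4 = 0"
    using sum0 c1 by simp_all
  then show ?thesis
    by (auto simp: less_Suc_eq numeral_eq_Suc)
qed

theorem theorem7p13:
  shows "(\<forall>c :: nat \<Rightarrow> complex.
            (\<forall>\<tau> z. Im \<tau> > 0 \<longrightarrow> (\<Sum>i<5. c i * F5 i \<tau> z) = 0) \<longrightarrow> (\<forall>i<5. c i = 0))
       \<and> (\<forall>\<alpha>\<in>setA. \<forall>\<beta>\<in>setB. \<forall>\<tau> z. Im \<tau> > 0 \<longrightarrow>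
            theta \<alpha> \<beta> \<tau> z ^ 2 + theta (0,0,0) (0,0,0) \<tau> z ^ 2
            = theta \<alpha> (0,0,0) \<tau> z ^ 2 + theta (0,0,0) \<beta> \<tau> z ^ 2)"
proof (intro conjI allI impI ballI)
  fix c :: "nat \<Rightarrow> complex" and i :: nat
  assume "\<forall>\<tau> z. Im \<tau> > 0 \<longrightarrow> (\<Sum>i<5. c i * F5 i \<tau> z) = 0" and "i < 5"
  then show "c i = 0"
    using F5_linearly_independent by blast
next
  fix \<alpha> \<beta> \<tau> z
  assume "\<alpha> \<in> setA" and "\<beta> \<in> setB" and "Im \<tau> > 0"
  then consider "\<alpha> = (0, 0, 0)" | "\<alpha> = (1/2, 0, 1/2)"
    unfolding setA_def by blast
  then show "theta \<alpha> \<beta> \<tau> z ^ 2 + theta (0,0,0) (0,0,0) \<tau> z ^ 2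
      = theta \<alpha> (0,0,0) \<tau> z ^ 2 + theta (0,0,0) \<beta> \<tau> z ^ 2"
  proof cases
    case 2
    then show ?thesis
      using theta_sq_diff_shift[OF \<open>\<beta> \<in> setB\<close> \<open>Im \<tau> > 0\<close>, of z] by (simp add: algebra_simps)
  qed (simp add: add.commute)
qed

end
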